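(* Let $H$ carry a pre-Hopf-Frobenius algebra structure in a strict symmetric monoidal category $\mathcal{C}$, with green monoid $(\mu_g,\eta_g)$, green comonoid $(\delta_g,\varepsilon_g)$, red monoid $(\mu_r,\eta_r)$, red comonoid $(\delta_r,\varepsilon_r)$ and antipode $s$. Then $(H,\eta_r,\varepsilon_g)$ is an integral Hopf algebra (for the Hopf algebra $(H,\mu_g,\eta_g,\delta_r,\varepsilon_r,s)$) if and only if $$s=\big(\mathrm{id}_H\otimes(\varepsilon_r\circ\mu_r)\big)\circ\big((\delta_g\circ\eta_g)\otimes\mathrm{id}_H\big).$$
   Context: $\mathcal{C}$ is a strict symmetric monoidal category with unit object $I$ and symmetry $\sigma$. A Hopf algebra $(H,\mu,\eta,\Delta,\varepsilon,s)$: an object $H$ with an associative unital monoid $(\mu,\eta)$ and coassociative counital comonoid $(\Delta,\varepsilon)$ satisfying $\Delta\circ\mu=(\mu\otimes\mu)\circ(\mathrm{id}\otimes\sigma_{H,H}\otimes\mathrm{id})\circ(\Delta\otimes\Delta)$, $\Delta\circ\eta=\eta\otimes\eta$, $\varepsilon\circ\mu=\varepsilon\otimes\varepsilon$, $\varepsilon\circ\eta=\mathrm{id}_I$, and $s\colon H\to H$ with $\mu\circ(s\otimes\mathrm{id})\circ\Delta=\eta\circ\varepsilon=\mu\circ(\mathrm{id}\otimes s)\circ\Delta$. For such a Hopf algebra, a left cointegral is a point $\Lambda\colon I\to H$ with $\mu\circ(\Lambda\otimes\mathrm{id}_H)=\Lambda\circ\varepsilon$; a right integral is a copoint $\lambda\colon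 H\to I$ with $(\mathrm{id}_H\otimes\lambda)\circ\Delta=\eta\circ\lambda$; $(H,\Lambda,\lambda)$ is an integral Hopf algebra if $\Lambda$ is a left cointegral, $\lambda$ a right integral and $\lambda\circ\Lambda=\mathrm{id}_I$. A Frobenius algebra is a monoid $(m,u)$ and comonoid $(d,c)$ on the same object with $(\mathrm{id}\otimes m)\circ(d\otimes\mathrm{id})=d\circ m=(m\otimes\mathrm{id})\circ(\mathrm{id}\otimes d)$. A pre-Hopf-Frobenius algebra consists of an object $H$ with a green monoid $(\mu_g,\eta_g)$, green comonoid $(\delta_g,\varepsilon_g)$, red monoid $(\mu_r,\eta_r)$, red comonoid $(\delta_r,\varepsilon_r)$ and an endomorphism $s$ such that $(\mu_g,\eta_g,\delta_g,\varepsilon_g)$ and $(\mu_r,\eta_r,\delta_r,\varepsilon_r)$ are Frobenius algebras and $(\mu_g,\eta_g,\delta_r,\varepsilon_r,s)$ is a Hopf algebra. *)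

theory Defs
  imports Main
begin

text \<open>Morphisms
are the elements of type 'm (every element is a morphism), objects the elements
of type 'o.  Composition \<open>mcomp f g\<close> means f after g and is only constrained
when \<open>mdom f = mcod g\<close>.\<close>

record ('o, 'm) smcat =
  mdom  :: "'m \<Rightarrow> 'o"
  mcod  :: "'m \<Rightarrow> 'o"
  mcomp :: "'m \<Rightarrow> 'm \<Rightarrow> 'm"
  mid   :: "'o \<Rightarrow> 'm"
  otens :: "'o \<Rightarrow> 'o \<Rightarrow> 'o"
  mtens :: "'m \<Rightarrow> 'm \<Rightarrow> 'm"
  munit :: "'o"
  msym  :: "'o \<Rightarrow> 'o \<Rightarrow> 'm"

definition hom :: "('o, 'm) smcat \<Rightarrow> 'm \<Rightarrow> 'o \<Rightarrow> 'o \<Rightarrow> bool" where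
  "hom C f A B \<longleftrightarrow> mdom C f = A \<and> mcod C f = B"

definition strict_symmetric_monoidal_cat :: "('o, 'm) smcat \<Rightarrow> bool" where
  "strict_symmetric_monoidal_cat C \<longleftrightarrow>
     \<comment> \<open>category\<close>
     (\<forall>A. hom C (mid C A) A A) \<and>
     (\<forall>f g. mdom C f = mcod C g \<longrightarrow> hom C (mcomp C f g) (mdom C g) (mcod C f)) \<and>
     (\<forall>f g h. mdom C f = mcod C g \<and> mdom C g = mcod C h \<longrightarrow>
        mcomp C (mcomp C f g) h = mcomp C f (mcomp C g h)) \<and>
     (\<forall>f. mcomp C f (mid C (mdom C f)) = f \<and> mcomp C (mid C (mcod C f)) f = f) \<and>
     \<comment> \<open>tensor bifunctor\<close>
     (\<forall>f g. hom C (mtens C f g) (otens C (mdom C f) (mdom C g)) (otens C (mcod C f) (mcod C g))) \<and>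
     (\<forall>A B. mtens C (mid C A) (mid C B) = mid C (otens C A B)) \<and>
     (\<forall>f g h k. mdom C f = mcod C g \<and> mdom C h = mcod C k \<longrightarrow>
        mtens C (mcomp C f g) (mcomp C h k) = mcomp C (mtens C f h) (mtens C g k)) \<and>
     \<comment> \<open>strictness\<close>
     (\<forall>A B D. otens C (otens C A B) D = otens C A (otens C B D)) \<and>
     (\<forall>A. otens C (munit C) A = A \<and> otens C A (munit C) = A) \<and>
     (\<forall>f g h. mtens C (mtens C f g) h = mtens C f (mtens C g h)) \<and>
     (\<forall>f. mtens C (mid C (munit C)) f = f \<and> mtens C f (mid C (munit C)) = f) \<and>
     \<comment> \<open>symmetry\<close>
     (\<forall>A B. hom C (msym C A B) (otens C A B) (otens C B A)) \<and>
     (\<forall>f g. mcomp C (msym C (mcod C f) (mcod C g)) (mtens C f g)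
             = mcomp C (mtens C g f) (msym C (mdom C f) (mdom C g))) \<and>
     (\<forall>A B. mcomp C (msym C B A) (msym C A B) = mid C (otens C A B)) \<and>
     (\<forall>A B D. msym C A (otens C B D)
             = mcomp C (mtens C (mid C B) (msym C A D)) (mtens C (msym C A B) (mid C D)))"

definition is_monoid :: "('o, 'm) smcat \<Rightarrow> 'o \<Rightarrow> 'm \<Rightarrow> 'm \<Rightarrow> bool" where
  "is_monoid C H m u \<longleftrightarrow>
     hom C m (otens C H H) H \<and> hom C u (munit C) H \<and>
     mcomp C m (mtens C m (mid C H)) = mcomp C m (mtens C (mid C H) m) \<and>
     mcomp C m (mtens C u (mid C H)) = mid C H \<and>
     mcomp C m (mtens C (mid C H) u) = mid C H"

definition is_comonoid :: "('o, 'm) smcat \<Rightarrow> 'o \<Rightarrow> 'm \<Rightarrow> 'm \<Rightarrow> bool" where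
  "is_comonoid C H d c \<longleftrightarrow>
     hom C d H (otens C H H) \<and> hom C c H (munit C) \<and>
     mcomp C (mtens C d (mid C H)) d = mcomp C (mtens C (mid C H) d) d \<and>
     mcomp C (mtens C c (mid C H)) d = mid C H \<and>
     mcomp C (mtens C (mid C H) c) d = mid C H"

definition is_frobenius :: "('o, 'm) smcat \<Rightarrow> 'o \<Rightarrow> 'm \<Rightarrow> 'm \<Rightarrow> 'm \<Rightarrow> 'm \<Rightarrow> bool" where
  "is_frobenius C H m u d c \<longleftrightarrow>
     is_monoid C H m u \<and> is_comonoid C H d c \<and>
     mcomp C (mtens C (mid C H) m) (mtens C d (mid C H)) = mcomp C d m \<and>
     mcomp C d m = mcomp C (mtens C m (mid C H)) (mtens C (mid C H) d)"

definition is_hopf :: "('o, 'm) smcat \<Rightarrow> 'o \<Rightarrow> 'm \<Rightarrow> 'm \<Rightarrow> 'm \<Rightarrow> 'm \<Rightarrow> 'm \<Rightarrow> bool" where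
  "is_hopf C H mu eta Delta eps s \<longleftrightarrow>
     is_monoid C H mu eta \<and> is_comonoid C H Delta eps \<and> hom C s H H \<and>
     mcomp C Delta mu =
       mcomp C (mtens C mu mu)
         (mcomp C (mtens C (mid C H) (mtens C (msym C H H) (mid C H))) (mtens C Delta Delta)) \<and>
     mcomp C Delta eta = mtens C eta eta \<and>
     mcomp C eps mu = mtens C eps eps \<and>
     mcomp C eps eta = mid C (munit C) \<and>
     mcomp C mu (mcomp C (mtens C s (mid C H)) Delta) = mcomp C eta eps \<and>
     mcomp C mu (mcomp C (mtens C (mid C H) s) Delta) = mcomp C eta eps"

definition is_left_cointegral :: "('o, 'm) smcat \<Rightarrow> 'o \<Rightarrow> 'm \<Rightarrow> 'm \<Rightarrow> 'm \<Rightarrow> bool" where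
  "is_left_cointegral C H mu eps Lam \<longleftrightarrow>
     hom C Lam (munit C) H \<and> mcomp C mu (mtens C Lam (mid C H)) = mcomp C Lam eps"

definition is_right_integral :: "('o, 'm) smcat \<Rightarrow> 'o \<Rightarrow> 'm \<Rightarrow> 'm \<Rightarrow> 'm \<Rightarrow> bool" where
  "is_right_integral C H eta Delta lam \<longleftrightarrow>
     hom C lam H (munit C) \<and> mcomp C (mtens C (mid C H) lam) Delta = mcomp C eta lam"

definition integral_hopf ::
  "('o, 'm) smcat \<Rightarrow> 'o \<Rightarrow> 'm \<Rightarrow> 'm \<Rightarrow> 'm \<Rightarrow> 'm \<Rightarrow> 'm \<Rightarrow> 'm \<Rightarrow> 'm \<Rightarrow> bool" where
  "integral_hopf C H mu eta Delta eps s Lam lam \<longleftrightarrow>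
     is_hopf C H mu eta Delta eps s \<and>
     is_left_cointegral C H mu eps Lam \<and>
     is_right_integral C H eta Delta lam \<and>
     mcomp C lam Lam = mid C (munit C)"

definition pre_hopf_frobenius ::
  "('o, 'm) smcat \<Rightarrow> 'o \<Rightarrow> 'm \<Rightarrow> 'm \<Rightarrow> 'm \<Rightarrow> 'm \<Rightarrow> 'm \<Rightarrow> 'm \<Rightarrow> 'm \<Rightarrow> 'm \<Rightarrow> 'm \<Rightarrow> bool" where
  "pre_hopf_frobenius C H mu_g eta_g delta_g eps_g mu_r eta_r delta_r eps_r s \<longleftrightarrow>
     is_frobenius C H mu_g eta_g delta_g eps_g \<and>
     is_frobenius C H mu_r eta_r delta_r eps_r \<and>
     is_hopf C H mu_g eta_g delta_r eps_r s"

end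

theory Submission
  imports Defs
begin

text \<open>Each Frobenius structure makes \<open>H\<close> self-dual, so endomorphisms \<open>f\<close> of \<open>H\<close>
correspond to pairings \<open>cap \<cdot> (1 \<otimes> f)\<close>. For the green duality, the formula for \<open>s\<close>
says exactly that the red pairing is the green one twisted by the antipode:
\<open>\<epsilon>\<^sub>r \<mu>\<^sub>r = \<epsilon>\<^sub>g \<mu>\<^sub>g (1 \<otimes> s)\<close>.

If \<open>\<eta>\<^sub>r\<close> is a normalised cointegral and \<open>\<epsilon>\<^sub>g\<close> an integral, the Hopf identity
\<open>\<Lambda>\<^sub>1 \<lambda>(\<Lambda>\<^sub>2 S(x)) = x\<close> says that the red mate of the twisted pairing is the identity,
so the twisted pairing is the red pairing. Conversely, the twisted pairing gives
\<open>\<epsilon>\<^sub>g = \<epsilon>\<^sub>r \<mu>\<^sub>r (1 \<otimes> \<eta>\<^sub>g)\<close>, from which the integral property and the normalisation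
follow; and since \<open>s\<close> has a right inverse (the transition between the two dualities),
also \<open>\<epsilon>\<^sub>g \<mu>\<^sub>g (\<eta>\<^sub>r \<otimes> 1) = \<epsilon>\<^sub>r\<close>, which by nondegeneracy of the red pairing makes
\<open>\<eta>\<^sub>r\<close> a cointegral.\<close>

locale strict_smc =
  fixes C :: "('o, 'm) smcat"
  assumes strict_smc: "strict_symmetric_monoidal_cat C"
begin

abbreviation cat_comp (infixr "\<cdot>" 55) where "f \<cdot> g \<equiv> mcomp C f g"
abbreviation cat_tensor (infixr "\<otimes>" 60) where "f \<otimes> g \<equiv> mtens C f g"
abbreviation cat_id ("\<one>") where "\<one> \<equiv> mid C"
abbreviation cat_dom where "cat_dom \<equiv> mdom C"
abbreviation cat_cod where "cat_cod \<equiv> mcod C"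
abbreviation ob_tensor (infixr "\<odot>" 60) where "A \<odot> B \<equiv> otens C A B"
abbreviation unit_ob ("\<I>") where "\<I> \<equiv> munit C"
abbreviation symmetry ("\<sigma>") where "\<sigma> \<equiv> msym C"

lemma dom_id [simp]: "cat_dom (\<one> A) = A"
  and cod_id [simp]: "cat_cod (\<one> A) = A"
  and dom_comp [simp]: "cat_dom f = cat_cod g \<Longrightarrow> cat_dom (f \<cdot> g) = cat_dom g"
  and cod_comp [simp]: "cat_dom f = cat_cod g \<Longrightarrow> cat_cod (f \<cdot> g) = cat_cod f"
  and dom_tensor [simp]: "cat_dom (f \<otimes> g) = cat_dom f \<odot> cat_dom g"
  and cod_tensor [simp]: "cat_cod (f \<otimes> g) = cat_cod f \<odot> cat_cod g"
  and dom_sym [simp]: "cat_dom (\<sigma> A B) = A \<odot> B"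
  and cod_sym [simp]: "cat_cod (\<sigma> A B) = B \<odot> A"
  using strict_smc unfolding strict_symmetric_monoidal_cat_def hom_def by auto

lemma comp_assoc [simp]:
  "cat_dom f = cat_cod g \<Longrightarrow> cat_dom g = cat_cod h \<Longrightarrow> (f \<cdot> g) \<cdot> h = f \<cdot> (g \<cdot> h)"
  and comp_id [simp]: "cat_dom f = A \<Longrightarrow> f \<cdot> \<one> A = f"
  and id_comp [simp]: "cat_cod f = A \<Longrightarrow> \<one> A \<cdot> f = f"
  and tensor_id [simp]: "\<one> A \<otimes> \<one> B = \<one> (A \<odot> B)"
  and ob_tensor_assoc [simp]: "(A \<odot> B) \<odot> D = A \<odot> (B \<odot> D)"
  and ob_tensor_unit [simp]: "\<I> \<odot> A = A" "A \<odot> \<I> = A"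
  and tensor_assoc [simp]: "(f \<otimes> g) \<otimes> h = f \<otimes> (g \<otimes> h)"
  and tensor_unit [simp]: "\<one> \<I> \<otimes> f = f" "f \<otimes> \<one> \<I> = f"
  using strict_smc unfolding strict_symmetric_monoidal_cat_def by auto

lemma interchange:
  "cat_dom f = cat_cod g \<Longrightarrow> cat_dom h = cat_cod k \<Longrightarrow> (f \<cdot> g) \<otimes> (h \<cdot> k) = (f \<otimes> h) \<cdot> (g \<otimes> k)"
  and sym_natural: "\<sigma> (cat_cod f) (cat_cod g) \<cdot> (f \<otimes> g) = (g \<otimes> f) \<cdot> \<sigma> (cat_dom f) (cat_dom g)"
  and sym_inverse: "\<sigma> B A \<cdot> \<sigma> A B = \<one> (A \<odot> B)"
  and sym_hexagon: "\<sigma> A (B \<odot> D) = (\<one> B \<otimes> \<sigma> A D) \<cdot> (\<sigma> A B \<otimes> \<one> D)"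
  using strict_smc unfolding strict_symmetric_monoidal_cat_def by auto

lemma comp_assoc_eq:
  "f \<cdot> g = h \<Longrightarrow> cat_dom f = cat_cod g \<Longrightarrow> cat_dom g = cat_cod k \<Longrightarrow> f \<cdot> (g \<cdot> k) = h \<cdot> k"
  by (metis comp_assoc)

lemma sym_unit_right [simp]: "\<sigma> A \<I> = \<one> A"
proof -
  have idem: "\<sigma> A \<I> \<cdot> \<sigma> A \<I> = \<sigma> A \<I>"
    using sym_hexagon[of A \<I> \<I>] by simp
  have "\<sigma> A \<I> = (\<sigma> \<I> A \<cdot> \<sigma> A \<I>) \<cdot> \<sigma> A \<I>"
    using sym_inverse[where A=A and B=\<I>] by simp
  also have "\<dots> = \<sigma> \<I> A \<cdot> \<sigma> A \<I>"
    using idem by simp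
  also have "\<dots> = \<one> A"
    using sym_inverse[where A=A and B=\<I>] by simp
  finally show ?thesis .
qed

lemma sym_unit_left [simp]: "\<sigma> \<I> A = \<one> A"
  using sym_inverse[where A=A and B=\<I>] by simp

lemma tensor_split_left: "f \<otimes> g = (f \<otimes> \<one> (cat_cod g)) \<cdot> (\<one> (cat_dom f) \<otimes> g)"
  using interchange[of f "\<one> (cat_dom f)" "\<one> (cat_cod g)" g] by simp

lemma tensor_split_right: "f \<otimes> g = (\<one> (cat_cod f) \<otimes> g) \<cdot> (f \<otimes> \<one> (cat_dom g))"
  using interchange[of "\<one> (cat_cod f)" f g "\<one> (cat_dom g)"] by simp

lemma tensor_slide:
  "(f \<otimes> \<one> (cat_cod g)) \<cdot> (\<one> (cat_dom f) \<otimes> g) = (\<one> (cat_cod f) \<otimes> g) \<cdot> (f \<otimes> \<one> (cat_dom g))"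
  using tensor_split_left tensor_split_right by metis

lemma comp_tensor_id [simp]:
  "cat_dom f = cat_cod g \<Longrightarrow> (f \<cdot> g) \<otimes> \<one> A = (f \<otimes> \<one> A) \<cdot> (g \<otimes> \<one> A)"
  "cat_dom f = cat_cod g \<Longrightarrow> \<one> A \<otimes> (f \<cdot> g) = (\<one> A \<otimes> f) \<cdot> (\<one> A \<otimes> g)"
  using interchange[of f g "\<one> A" "\<one> A"] interchange[of "\<one> A" "\<one> A" f g] by simp_all

lemma id_tensor_id_tensor [simp]: "\<one> A \<otimes> (\<one> B \<otimes> f) = \<one> (A \<odot> B) \<otimes> f"
  by (metis tensor_assoc tensor_id)

lemma point_tensor_comp:
  "cat_dom p = \<I> \<Longrightarrow> cat_dom f = cat_cod g \<Longrightarrow> (p \<otimes> f) \<cdot> g = p \<otimes> (f \<cdot> g)"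
  using interchange[of p "\<one> \<I>" f g] by simp

lemma scalars_commute:
  "cat_cod f = \<I> \<Longrightarrow> cat_cod g = \<I> \<Longrightarrow>
     f \<cdot> (\<one> (cat_dom f) \<otimes> g) = g \<cdot> (f \<otimes> \<one> (cat_dom g))"
  using tensor_split_left[of f g] tensor_split_right[of f g] by simp

end

locale self_duality = strict_smc C for C :: "('o, 'm) smcat" +
  fixes H :: 'o and cup cap :: 'm
  assumes cup_type [simp]: "cat_dom cup = \<I>" "cat_cod cup = H \<odot> H"
    and cap_type [simp]: "cat_dom cap = H \<odot> H" "cat_cod cap = \<I>"
    and snake_left: "(\<one> H \<otimes> cap) \<cdot> (cup \<otimes> \<one> H) = \<one> H"
    and snake_right: "(cap \<otimes> \<one> H) \<cdot> (\<one> H \<otimes> cup) = \<one> H"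
begin

definition mate :: "'m \<Rightarrow> 'm" where
  "mate \<beta> = (\<one> H \<otimes> \<beta>) \<cdot> (cup \<otimes> \<one> H)"

lemma mate_type [simp]:
  "cat_dom \<beta> = H \<odot> H \<Longrightarrow> cat_dom (mate \<beta>) = H"
  "cat_dom \<beta> = H \<odot> H \<Longrightarrow> cat_cod \<beta> = \<I> \<Longrightarrow> cat_cod (mate \<beta>) = H"
  unfolding mate_def by simp_all

lemma mate_cap: "mate cap = \<one> H"
  unfolding mate_def by (rule snake_left)

lemma mate_comp:
  assumes "cat_dom \<beta> = H \<odot> H" "cat_dom f = H" "cat_cod f = H"
  shows "mate \<beta> \<cdot> f = mate (\<beta> \<cdot> (\<one> H \<otimes> f))"
proof -
  have "(cup \<otimes> \<one> H) \<cdot> f = (\<one> (H \<odot> H) \<otimes> f) \<cdot> (cup \<otimes> \<one> H)"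
    using tensor_slide[of cup f] assms by simp
  then show ?thesis
    using assms unfolding mate_def by simp
qed

lemma cap_mate:
  assumes "cat_dom \<beta> = H \<odot> H" "cat_cod \<beta> = \<I>"
  shows "cap \<cdot> (\<one> H \<otimes> mate \<beta>) = \<beta>"
proof -
  have "cap \<cdot> (\<one> H \<otimes> mate \<beta>) = (cap \<cdot> (\<one> (H \<odot> H) \<otimes> \<beta>)) \<cdot> (\<one> H \<otimes> cup \<otimes> \<one> H)"
    using assms unfolding mate_def by simp
  also have "cap \<cdot> (\<one> (H \<odot> H) \<otimes> \<beta>) = \<beta> \<cdot> (cap \<otimes> \<one> (H \<odot> H))"
    using scalars_commute[of cap \<beta>] assms by simp
  also have "(\<beta> \<cdot> (cap \<otimes> \<one> (H \<odot> H))) \<cdot> (\<one> H \<otimes> cup \<otimes> \<one> H)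
      = \<beta> \<cdot> (((cap \<otimes> \<one> H) \<cdot> (\<one> H \<otimes> cup)) \<otimes> \<one> H)"
    using assms by simp
  finally show ?thesis
    using assms by (simp add: snake_right)
qed

lemma mate_cap_comp:
  assumes "cat_dom f = H" "cat_cod f = H"
  shows "mate (cap \<cdot> (\<one> H \<otimes> f)) = f"
  using mate_comp[of cap f] assms by (simp add: mate_cap)

lemma cap_tensor_cancel:
  assumes "cat_dom f = H" "cat_cod f = H" "cat_dom g = H" "cat_cod g = H"
    and "cap \<cdot> (f \<otimes> \<one> H) = cap \<cdot> (g \<otimes> \<one> H)"
  shows "f = g"
proof -
  have recover: "((cap \<cdot> (h \<otimes> \<one> H)) \<otimes> \<one> H) \<cdot> (\<one> H \<otimes> cup) = h"
    if "cat_dom h = H" "cat_cod h = H" for h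
  proof -
    have "((cap \<cdot> (h \<otimes> \<one> H)) \<otimes> \<one> H) \<cdot> (\<one> H \<otimes> cup) = (cap \<otimes> \<one> H) \<cdot> (h \<otimes> \<one> (H \<odot> H)) \<cdot> (\<one> H \<otimes> cup)"
      using that by simp
    also have "(h \<otimes> \<one> (H \<odot> H)) \<cdot> (\<one> H \<otimes> cup) = (\<one> H \<otimes> cup) \<cdot> h"
      using tensor_slide[of h cup] that by simp
    finally show ?thesis
      using comp_assoc_eq[OF snake_right, of h] that by simp
  qed
  show ?thesis
    using recover[of f] recover[of g] assms by simp
qed

lemma eq_mate_iff:
  assumes "cat_dom f = H" "cat_cod f = H" "cat_dom \<beta> = H \<odot> H" "cat_cod \<beta> = \<I>"
  shows "f = mate \<beta> \<longleftrightarrow> cap \<cdot> (\<one> H \<otimes> f) = \<beta>"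
  using assms cap_mate mate_cap_comp by metis

end

locale frobenius_algebra = strict_smc C for C :: "('o, 'm) smcat" +
  fixes H :: 'o and m u d c :: 'm
  assumes frobenius: "is_frobenius C H m u d c"
begin

lemma types [simp]:
  "cat_dom m = H \<odot> H" "cat_cod m = H" "cat_dom u = \<I>" "cat_cod u = H"
  "cat_dom d = H" "cat_cod d = H \<odot> H" "cat_dom c = H" "cat_cod c = \<I>"
  using frobenius unfolding is_frobenius_def is_monoid_def is_comonoid_def hom_def by auto

lemma assoc: "m \<cdot> (m \<otimes> \<one> H) = m \<cdot> (\<one> H \<otimes> m)"
  and unit_left: "m \<cdot> (u \<otimes> \<one> H) = \<one> H"
  and unit_right: "m \<cdot> (\<one> H \<otimes> u) = \<one> H"
  and counit_left: "(c \<otimes> \<one> H) \<cdot> d = \<one> H"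
  and counit_right: "(\<one> H \<otimes> c) \<cdot> d = \<one> H"
  and frobenius_left: "(\<one> H \<otimes> m) \<cdot> (d \<otimes> \<one> H) = d \<cdot> m"
  and frobenius_right: "(m \<otimes> \<one> H) \<cdot> (\<one> H \<otimes> d) = d \<cdot> m"
  using frobenius unfolding is_frobenius_def is_monoid_def is_comonoid_def by auto

lemma cap_comult_left: "(\<one> H \<otimes> (c \<cdot> m)) \<cdot> (d \<otimes> \<one> H) = m"
proof -
  have "(\<one> H \<otimes> (c \<cdot> m)) \<cdot> (d \<otimes> \<one> H) = ((\<one> H \<otimes> c) \<cdot> d) \<cdot> m"
    by (simp add: frobenius_left)
  then show ?thesis
    by (simp add: counit_right)
qed

lemma cap_comult_right: "((c \<cdot> m) \<otimes> \<one> H) \<cdot> (\<one> H \<otimes> d) = m"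
proof -
  have "((c \<cdot> m) \<otimes> \<one> H) \<cdot> (\<one> H \<otimes> d) = ((c \<otimes> \<one> H) \<cdot> d) \<cdot> m"
    by (simp add: frobenius_right)
  then show ?thesis
    by (simp add: counit_left)
qed

sublocale self_duality C H "d \<cdot> u" "c \<cdot> m"
proof
  have "(\<one> H \<otimes> (c \<cdot> m)) \<cdot> ((d \<cdot> u) \<otimes> \<one> H) = m \<cdot> (u \<otimes> \<one> H)"
    using comp_assoc_eq[OF cap_comult_left, of "u \<otimes> \<one> H"] by simp
  then show "(\<one> H \<otimes> (c \<cdot> m)) \<cdot> ((d \<cdot> u) \<otimes> \<one> H) = \<one> H"
    by (simp add: unit_left)
  have "((c \<cdot> m) \<otimes> \<one> H) \<cdot> (\<one> H \<otimes> (d \<cdot> u)) = m \<cdot> (\<one> H \<otimes> u)"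
    using comp_assoc_eq[OF cap_comult_right, of "\<one> H \<otimes> u"] by simp
  then show "((c \<cdot> m) \<otimes> \<one> H) \<cdot> (\<one> H \<otimes> (d \<cdot> u)) = \<one> H"
    by (simp add: unit_right)
qed simp_all

end

locale hopf_algebra = strict_smc C for C :: "('o, 'm) smcat" +
  fixes H :: 'o and mu eta Delta eps s :: 'm
  assumes hopf: "is_hopf C H mu eta Delta eps s"
begin

lemma types [simp]:
  "cat_dom mu = H \<odot> H" "cat_cod mu = H" "cat_dom eta = \<I>" "cat_cod eta = H"
  "cat_dom Delta = H" "cat_cod Delta = H \<odot> H" "cat_dom eps = H" "cat_cod eps = \<I>"
  "cat_dom s = H" "cat_cod s = H"
  using hopf unfolding is_hopf_def is_monoid_def is_comonoid_def hom_def by auto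

lemma assoc: "mu \<cdot> (mu \<otimes> \<one> H) = mu \<cdot> (\<one> H \<otimes> mu)"
  and unit_left: "mu \<cdot> (eta \<otimes> \<one> H) = \<one> H"
  and unit_right: "mu \<cdot> (\<one> H \<otimes> eta) = \<one> H"
  and coassoc: "(Delta \<otimes> \<one> H) \<cdot> Delta = (\<one> H \<otimes> Delta) \<cdot> Delta"
  and counit_left: "(eps \<otimes> \<one> H) \<cdot> Delta = \<one> H"
  and counit_right: "(\<one> H \<otimes> eps) \<cdot> Delta = \<one> H"
  and comult_mult:
    "Delta \<cdot> mu = (mu \<otimes> mu) \<cdot> (\<one> H \<otimes> \<sigma> H H \<otimes> \<one> H) \<cdot> (Delta \<otimes> Delta)"
  and comult_unit: "Delta \<cdot> eta = eta \<otimes> eta"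
  and counit_mult: "eps \<cdot> mu = eps \<otimes> eps"
  and counit_unit: "eps \<cdot> eta = \<one> \<I>"
  and antipode_left: "mu \<cdot> (s \<otimes> \<one> H) \<cdot> Delta = eta \<cdot> eps"
  and antipode_right: "mu \<cdot> (\<one> H \<otimes> s) \<cdot> Delta = eta \<cdot> eps"
  using hopf unfolding is_hopf_def is_monoid_def is_comonoid_def by auto

lemma antipode_unit: "s \<cdot> eta = eta"
proof -
  have "eta = (eta \<cdot> eps) \<cdot> eta"
    by (simp add: counit_unit)
  also have "\<dots> = mu \<cdot> (s \<otimes> \<one> H) \<cdot> Delta \<cdot> eta"
    by (simp flip: antipode_left)
  also have "\<dots> = mu \<cdot> (\<one> H \<otimes> eta) \<cdot> s \<cdot> eta"
    using tensor_split_right[of "s \<cdot> eta" eta] interchange[of s eta "\<one> H" eta]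
    by (simp add: comult_unit)
  finally show ?thesis
    using comp_assoc_eq[OF unit_right, of "s \<cdot> eta"] by simp
qed

lemma counit_antipode: "eps \<cdot> s = eps"
proof -
  have "eps = (eps \<cdot> eta) \<cdot> eps"
    by (simp add: counit_unit)
  also have "\<dots> = eps \<cdot> mu \<cdot> (s \<otimes> \<one> H) \<cdot> Delta"
    by (simp flip: antipode_left)
  also have "\<dots> = (eps \<cdot> s) \<cdot> (\<one> H \<otimes> eps) \<cdot> Delta"
    using tensor_split_left[of "eps \<cdot> s" eps] interchange[of eps s eps "\<one> H"]
    by (simp add: counit_mult flip: comp_assoc)
  finally show ?thesis
    by (simp add: counit_right)
qed

lemma mult_antipode_comult: "mu \<cdot> (mu \<otimes> s) \<cdot> (\<one> H \<otimes> Delta) = \<one> H \<otimes> eps"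
proof -
  have "mu \<cdot> (mu \<otimes> s) \<cdot> (\<one> H \<otimes> Delta) = mu \<cdot> (mu \<otimes> \<one> H) \<cdot> (\<one> H \<otimes> ((\<one> H \<otimes> s) \<cdot> Delta))"
    using tensor_split_left[of mu s] by simp
  also have "\<dots> = mu \<cdot> (\<one> H \<otimes> (mu \<cdot> (\<one> H \<otimes> s) \<cdot> Delta))"
    using comp_assoc_eq[OF assoc] by simp
  also have "\<dots> = mu \<cdot> (\<one> H \<otimes> eta) \<cdot> (\<one> H \<otimes> eps)"
    by (simp add: antipode_right)
  finally show ?thesis
    using comp_assoc_eq[OF unit_right, of "\<one> H \<otimes> eps"] by simp
qed

text \<open>In Sweedler notation: \<open>\<Lambda>\<^sub>1 \<otimes> \<Lambda>\<^sub>2 \<otimes> x = \<Lambda>\<^sub>1 x\<^sub>1 \<otimes> \<Lambda>\<^sub>2 x\<^sub>2 \<otimes> x\<^sub>3\<close>,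
since \<open>\<Delta>(\<Lambda> x\<^sub>1) \<otimes> x\<^sub>2 = \<epsilon>(x\<^sub>1) \<Delta>(\<Lambda>) \<otimes> x\<^sub>2\<close>.\<close>

lemma cointegral_comult:
  assumes "is_left_cointegral C H mu eps Lam"
  shows "(Delta \<cdot> Lam) \<otimes> \<one> H
    = (mu \<otimes> mu \<otimes> \<one> H) \<cdot> (\<one> (H \<odot> H \<odot> H) \<otimes> Delta) \<cdot> (\<one> H \<otimes> \<sigma> H H \<otimes> \<one> H)
      \<cdot> ((Delta \<cdot> Lam) \<otimes> Delta)"
proof -
  have [simp]: "cat_dom Lam = \<I>" "cat_cod Lam = H" and cointegral: "mu \<cdot> (Lam \<otimes> \<one> H) = Lam \<cdot> eps"
    using assms unfolding is_left_cointegral_def hom_def by auto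
  have "(Delta \<cdot> Lam) \<otimes> \<one> H = (((Delta \<cdot> Lam) \<cdot> eps) \<otimes> \<one> H) \<cdot> Delta"
    using point_tensor_comp[of "Delta \<cdot> Lam" "\<one> H" "\<one> H"] interchange[of "Delta \<cdot> Lam" eps "\<one> H" "\<one> H"]
    by (simp add: counit_left)
  also have "(Delta \<cdot> Lam) \<cdot> eps = Delta \<cdot> mu \<cdot> (Lam \<otimes> \<one> H)"
    by (simp add: cointegral)
  also have "\<dots> = (mu \<otimes> mu) \<cdot> (\<one> H \<otimes> \<sigma> H H \<otimes> \<one> H) \<cdot> ((Delta \<cdot> Lam) \<otimes> Delta)"
    using comp_assoc_eq[OF comult_mult, of "Lam \<otimes> \<one> H"] interchange[of Delta Lam Delta "\<one> H"]
    by simp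
  also have "(((mu \<otimes> mu) \<cdot> (\<one> H \<otimes> \<sigma> H H \<otimes> \<one> H) \<cdot> ((Delta \<cdot> Lam) \<otimes> Delta)) \<otimes> \<one> H) \<cdot> Delta
    = (mu \<otimes> mu \<otimes> \<one> H) \<cdot> (\<one> H \<otimes> \<sigma> H H \<otimes> \<one> (H \<odot> H)) \<cdot> ((Delta \<cdot> Lam) \<otimes> ((Delta \<otimes> \<one> H) \<cdot> Delta))"
    by (simp add: point_tensor_comp)
  also have "(Delta \<cdot> Lam) \<otimes> ((Delta \<otimes> \<one> H) \<cdot> Delta) = (\<one> (H \<odot> H \<odot> H) \<otimes> Delta) \<cdot> ((Delta \<cdot> Lam) \<otimes> Delta)"
    using interchange[of "\<one> (H \<odot> H)" "Delta \<cdot> Lam" "\<one> H \<otimes> Delta" Delta] by (simp add: coassoc)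
  also have "(\<one> H \<otimes> \<sigma> H H \<otimes> \<one> (H \<odot> H)) \<cdot> (\<one> (H \<odot> H \<odot> H) \<otimes> Delta) \<cdot> ((Delta \<cdot> Lam) \<otimes> Delta)
    = (\<one> (H \<odot> H \<odot> H) \<otimes> Delta) \<cdot> (\<one> H \<otimes> \<sigma> H H \<otimes> \<one> H) \<cdot> ((Delta \<cdot> Lam) \<otimes> Delta)"
    using comp_assoc_eq[OF tensor_slide[of "\<one> H \<otimes> \<sigma> H H" Delta]] by simp
  finally show ?thesis
    by simp
qed

lemma cointegral_comult_antipode:
  assumes "is_left_cointegral C H mu eps Lam"
  shows "(\<one> H \<otimes> (mu \<cdot> (\<one> H \<otimes> s))) \<cdot> ((Delta \<cdot> Lam) \<otimes> \<one> H)
    = (mu \<otimes> \<one> H) \<cdot> (\<one> H \<otimes> \<sigma> H H) \<cdot> ((Delta \<cdot> Lam) \<otimes> \<one> H)"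
proof -
  have [simp]: "cat_dom Lam = \<I>" "cat_cod Lam = H"
    using assms unfolding is_left_cointegral_def hom_def by auto
  have "(\<one> H \<otimes> (mu \<cdot> (\<one> H \<otimes> s))) \<cdot> (mu \<otimes> mu \<otimes> \<one> H) = mu \<otimes> (mu \<cdot> (mu \<otimes> s))"
    using interchange[of "\<one> H" mu "mu \<cdot> (\<one> H \<otimes> s)" "mu \<otimes> \<one> H"] tensor_slide[of mu s]
      tensor_split_left[of mu s]
    by simp
  then have absorb: "(\<one> H \<otimes> (mu \<cdot> (\<one> H \<otimes> s))) \<cdot> (mu \<otimes> mu \<otimes> \<one> H) \<cdot> (\<one> (H \<odot> H \<odot> H) \<otimes> Delta)
    = mu \<otimes> \<one> H \<otimes> eps"
    using comp_assoc_eq[of "\<one> H \<otimes> (mu \<cdot> (\<one> H \<otimes> s))" "mu \<otimes> mu \<otimes> \<one> H" _ "\<one> (H \<odot> H \<odot> H) \<otimes> Delta"]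
      interchange[of mu "\<one> (H \<odot> H)" "mu \<cdot> (mu \<otimes> s)" "\<one> H \<otimes> Delta"]
    by (simp add: mult_antipode_comult)
  have "(\<one> H \<otimes> (mu \<cdot> (\<one> H \<otimes> s))) \<cdot> ((Delta \<cdot> Lam) \<otimes> \<one> H)
    = (mu \<otimes> \<one> H \<otimes> eps) \<cdot> (\<one> H \<otimes> \<sigma> H H \<otimes> \<one> H) \<cdot> ((Delta \<cdot> Lam) \<otimes> Delta)"
    unfolding cointegral_comult[OF assms]
    using comp_assoc_eq[OF absorb, of "(\<one> H \<otimes> \<sigma> H H \<otimes> \<one> H) \<cdot> ((Delta \<cdot> Lam) \<otimes> Delta)"]
    by simp
  also have "\<dots> = (mu \<otimes> \<one> H) \<cdot> (\<one> (H \<odot> H \<odot> H) \<otimes> eps) \<cdot> (\<one> H \<otimes> \<sigma> H H \<otimes> \<one> H) \<cdot> ((Delta \<cdot> Lam) \<otimes> Delta)"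
    using tensor_split_left[of "mu \<otimes> \<one> H" eps] by simp
  also have "(\<one> (H \<odot> H \<odot> H) \<otimes> eps) \<cdot> (\<one> H \<otimes> \<sigma> H H \<otimes> \<one> H) \<cdot> ((Delta \<cdot> Lam) \<otimes> Delta)
    = (\<one> H \<otimes> \<sigma> H H) \<cdot> (\<one> (H \<odot> H \<odot> H) \<otimes> eps) \<cdot> ((Delta \<cdot> Lam) \<otimes> Delta)"
    using comp_assoc_eq[OF tensor_slide[of "\<one> H \<otimes> \<sigma> H H" eps, symmetric]] by simp
  also have "(\<one> (H \<odot> H \<odot> H) \<otimes> eps) \<cdot> ((Delta \<cdot> Lam) \<otimes> Delta) = (Delta \<cdot> Lam) \<otimes> \<one> H"
    using interchange[of "\<one> (H \<odot> H)" "Delta \<cdot> Lam" "\<one> H \<otimes> eps" Delta] by (simp add: counit_right)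
  finally show ?thesis .
qed

lemma cointegral_integral_snake:
  assumes "is_left_cointegral C H mu eps Lam" and "is_right_integral C H eta Delta lam"
    and "lam \<cdot> Lam = \<one> \<I>"
  shows "(\<one> H \<otimes> (lam \<cdot> mu \<cdot> (\<one> H \<otimes> s))) \<cdot> ((Delta \<cdot> Lam) \<otimes> \<one> H) = \<one> H"
proof -
  have [simp]: "cat_dom Lam = \<I>" "cat_cod Lam = H" "cat_dom lam = H" "cat_cod lam = \<I>"
    and integral: "(\<one> H \<otimes> lam) \<cdot> Delta = eta \<cdot> lam"
    using assms unfolding is_left_cointegral_def is_right_integral_def hom_def by auto
  have "(\<one> H \<otimes> (lam \<cdot> mu \<cdot> (\<one> H \<otimes> s))) \<cdot> ((Delta \<cdot> Lam) \<otimes> \<one> H)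
    = (\<one> H \<otimes> lam) \<cdot> (mu \<otimes> \<one> H) \<cdot> (\<one> H \<otimes> \<sigma> H H) \<cdot> ((Delta \<cdot> Lam) \<otimes> \<one> H)"
    using arg_cong[OF cointegral_comult_antipode[OF assms(1)], of "\<lambda>x. (\<one> H \<otimes> lam) \<cdot> x"]
    by simp
  also have "\<dots> = mu \<cdot> (\<one> H \<otimes> lam \<otimes> \<one> H) \<cdot> ((Delta \<cdot> Lam) \<otimes> \<one> H)"
  proof -
    have "(\<one> H \<otimes> lam) \<cdot> (mu \<otimes> \<one> H) = mu \<cdot> (\<one> (H \<odot> H) \<otimes> lam)"
      using tensor_slide[of mu lam] by simp
    moreover have "\<one> H \<otimes> ((\<one> H \<otimes> lam) \<cdot> \<sigma> H H) = \<one> H \<otimes> lam \<otimes> \<one> H"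
      using sym_natural[of lam "\<one> H"] by simp
    ultimately have "(\<one> H \<otimes> lam) \<cdot> (mu \<otimes> \<one> H) \<cdot> (\<one> H \<otimes> \<sigma> H H) = mu \<cdot> (\<one> H \<otimes> lam \<otimes> \<one> H)"
      using comp_assoc_eq[of "\<one> H \<otimes> lam" "mu \<otimes> \<one> H" _ "\<one> H \<otimes> \<sigma> H H"] by simp
    from comp_assoc_eq[OF this, of "(Delta \<cdot> Lam) \<otimes> \<one> H"] show ?thesis
      by simp
  qed
  also have "(\<one> H \<otimes> lam \<otimes> \<one> H) \<cdot> ((Delta \<cdot> Lam) \<otimes> \<one> H) = ((\<one> H \<otimes> lam) \<cdot> Delta \<cdot> Lam) \<otimes> \<one> H"
    using interchange[of "\<one> H \<otimes> lam" "Delta \<cdot> Lam" "\<one> H" "\<one> H"] by simp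
  also have "(\<one> H \<otimes> lam) \<cdot> Delta \<cdot> Lam = eta"
    using comp_assoc_eq[OF integral, of Lam] by (simp add: assms(3))
  finally show ?thesis
    by (simp add: unit_left)
qed

end

locale pre_hopf_frobenius_algebra =
  strict_smc C +
  green: frobenius_algebra C H mg eg dg ug +
  red: frobenius_algebra C H mr er dr ur +
  hopf: hopf_algebra C H mg eg dr ur s
  for C :: "('o, 'm) smcat" and H :: 'o and mg eg dg ug mr er dr ur s :: 'm
begin

lemma antipode_eq_mate_iff: "s = green.mate (ur \<cdot> mr) \<longleftrightarrow> ug \<cdot> mg \<cdot> (\<one> H \<otimes> s) = ur \<cdot> mr"
  using green.eq_mate_iff by simp

context
  assumes twisted_pairing: "ug \<cdot> mg \<cdot> (\<one> H \<otimes> s) = ur \<cdot> mr"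
begin

lemma twisted_pairing_comp: "cat_cod k = H \<odot> H \<Longrightarrow> ug \<cdot> mg \<cdot> (\<one> H \<otimes> s) \<cdot> k = ur \<cdot> mr \<cdot> k"
  using comp_assoc_eq[OF twisted_pairing, of k] by simp

lemma green_counit_eq: "ug = ur \<cdot> mr \<cdot> (\<one> H \<otimes> eg)"
proof -
  have "ug = ug \<cdot> mg \<cdot> (\<one> H \<otimes> (s \<cdot> eg))"
    by (simp add: hopf.antipode_unit green.unit_right)
  also have "\<dots> = (ug \<cdot> mg \<cdot> (\<one> H \<otimes> s)) \<cdot> (\<one> H \<otimes> eg)"
    by simp
  finally show ?thesis
    by (simp add: twisted_pairing)
qed

lemma green_counit_red_unit: "ug \<cdot> er = \<one> \<I>"
proof -
  have "(\<one> H \<otimes> eg) \<cdot> er = (er \<otimes> \<one> H) \<cdot> eg"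
    using tensor_slide[of er eg] by simp
  then have "ug \<cdot> er = ur \<cdot> (mr \<cdot> (er \<otimes> \<one> H)) \<cdot> eg"
    by (subst green_counit_eq) simp
  then show ?thesis
    by (simp add: red.unit_left hopf.counit_unit)
qed

lemma green_counit_right_integral: "(\<one> H \<otimes> ug) \<cdot> dr = eg \<cdot> ug"
proof -
  have "(\<one> H \<otimes> ug) \<cdot> dr = (\<one> H \<otimes> (ur \<cdot> mr)) \<cdot> (dr \<otimes> \<one> H) \<cdot> (\<one> H \<otimes> eg)"
    using tensor_slide[of dr eg] by (subst green_counit_eq) simp
  also have "\<dots> = mr \<cdot> (\<one> H \<otimes> eg)"
    using comp_assoc_eq[OF red.cap_comult_left, of "\<one> H \<otimes> eg"] by simp
  also have "\<dots> = ((ur \<cdot> mr) \<otimes> \<one> H) \<cdot> (\<one> H \<otimes> (dr \<cdot> eg))"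
    using comp_assoc_eq[OF red.cap_comult_right, of "\<one> H \<otimes> eg"] by simp
  also have "\<dots> = eg \<cdot> ur \<cdot> mr \<cdot> (\<one> H \<otimes> eg)"
  proof -
    have "\<one> H \<otimes> (dr \<cdot> eg) = (\<one> (H \<odot> H) \<otimes> eg) \<cdot> (\<one> H \<otimes> eg)"
      using tensor_split_right[of eg eg] by (simp add: hopf.comult_unit)
    then show ?thesis
      using comp_assoc_eq[OF tensor_slide[of "ur \<cdot> mr" eg], of "\<one> H \<otimes> eg"] by simp
  qed
  also have "\<dots> = eg \<cdot> ug"
    by (simp add: green_counit_eq)
  finally show ?thesis .
qed

lemma antipode_right_inverse: "s \<cdot> red.mate (ug \<cdot> mg) = \<one> H"
proof -
  have "s = green.mate (ur \<cdot> mr)"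
    using antipode_eq_mate_iff twisted_pairing by simp
  then have "s \<cdot> red.mate (ug \<cdot> mg) = green.mate (ur \<cdot> mr \<cdot> (\<one> H \<otimes> red.mate (ug \<cdot> mg)))"
    using green.mate_comp by simp
  also have "\<dots> = green.mate (ug \<cdot> mg)"
    using red.cap_mate by simp
  finally show ?thesis
    by (simp add: green.mate_cap)
qed

lemma green_pairing_red_unit: "ug \<cdot> mg \<cdot> (er \<otimes> \<one> H) = ur"
proof -
  let ?t = "red.mate (ug \<cdot> mg)"
  have "ug \<cdot> mg \<cdot> (er \<otimes> \<one> H) = ug \<cdot> mg \<cdot> (er \<otimes> \<one> H) \<cdot> s \<cdot> ?t"
    by (simp add: antipode_right_inverse)
  also have "\<dots> = ug \<cdot> mg \<cdot> (\<one> H \<otimes> s) \<cdot> (er \<otimes> \<one> H) \<cdot> ?t"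
  proof -
    have "(er \<otimes> \<one> H) \<cdot> s = (\<one> H \<otimes> s) \<cdot> (er \<otimes> \<one> H)"
      using tensor_split_left[of er s] tensor_split_right[of er s] by simp
    from comp_assoc_eq[OF this, of ?t] show ?thesis
      by simp
  qed
  also have "\<dots> = ur \<cdot> (mr \<cdot> (er \<otimes> \<one> H)) \<cdot> ?t"
    by (simp add: twisted_pairing_comp)
  also have "\<dots> = ur \<cdot> s \<cdot> ?t"
    using comp_assoc_eq[OF hopf.counit_antipode, of ?t] by (simp add: red.unit_left)
  finally show ?thesis
    by (simp add: antipode_right_inverse)
qed

lemma red_unit_left_cointegral: "mg \<cdot> (er \<otimes> \<one> H) = er \<cdot> ur"
proof -
  have "ur \<cdot> mr \<cdot> ((mg \<cdot> (er \<otimes> \<one> H)) \<otimes> \<one> H) = ug \<cdot> mg \<cdot> (mg \<otimes> \<one> H) \<cdot> (er \<otimes> \<one> (H \<odot> H)) \<cdot> (\<one> H \<otimes> s)"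
    using tensor_slide[of "mg \<cdot> (er \<otimes> \<one> H)" s] by (simp flip: twisted_pairing_comp)
  also have "\<dots> = ug \<cdot> mg \<cdot> (er \<otimes> \<one> H) \<cdot> mg \<cdot> (\<one> H \<otimes> s)"
    using comp_assoc_eq[OF green.assoc] comp_assoc_eq[OF tensor_slide[of er mg], of "\<one> H \<otimes> s"]
    by simp
  also have "\<dots> = (ur \<otimes> ur) \<cdot> (\<one> H \<otimes> s)"
    using comp_assoc_eq[OF green_pairing_red_unit, of "mg \<cdot> (\<one> H \<otimes> s)"]
      comp_assoc_eq[OF hopf.counit_mult, of "\<one> H \<otimes> s"]
    by simp
  also have "\<dots> = ur \<otimes> ur"
    using interchange[of ur "\<one> H" ur s] by (simp add: hopf.counit_antipode)
  also have "\<dots> = ur \<cdot> mr \<cdot> ((er \<cdot> ur) \<otimes> \<one> H)"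
    using tensor_split_right[of ur ur] comp_assoc_eq[OF red.unit_left, of "ur \<otimes> \<one> H"] by simp
  finally show ?thesis
    using red.cap_tensor_cancel[of "mg \<cdot> (er \<otimes> \<one> H)" "er \<cdot> ur"] by simp
qed

end

lemma integral_iff_twisted_pairing:
  "(is_left_cointegral C H mg ur er \<and> is_right_integral C H eg dr ug \<and> ug \<cdot> er = \<one> \<I>)
    \<longleftrightarrow> ug \<cdot> mg \<cdot> (\<one> H \<otimes> s) = ur \<cdot> mr"
proof
  assume "is_left_cointegral C H mg ur er \<and> is_right_integral C H eg dr ug \<and> ug \<cdot> er = \<one> \<I>"
  then have "red.mate (ug \<cdot> mg \<cdot> (\<one> H \<otimes> s)) = \<one> H"
    unfolding red.mate_def using hopf.cointegral_integral_snake by blast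
  then show "ug \<cdot> mg \<cdot> (\<one> H \<otimes> s) = ur \<cdot> mr"
    using red.eq_mate_iff[of "\<one> H" "ug \<cdot> mg \<cdot> (\<one> H \<otimes> s)"] by simp
next
  assume "ug \<cdot> mg \<cdot> (\<one> H \<otimes> s) = ur \<cdot> mr"
  then show "is_left_cointegral C H mg ur er \<and> is_right_integral C H eg dr ug \<and> ug \<cdot> er = \<one> \<I>"
    using red_unit_left_cointegral green_counit_right_integral green_counit_red_unit
    unfolding is_left_cointegral_def is_right_integral_def hom_def by simp
qed

end

theorem mainTheorem4:
  fixes C :: "('o, 'm) smcat" and H :: 'o
    and mu_g eta_g delta_g eps_g mu_r eta_r delta_r eps_r s :: 'm
  assumes "strict_symmetric_monoidal_cat C"
    and "pre_hopf_frobenius C H mu_g eta_g delta_g eps_g mu_r eta_r delta_r eps_r s"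
  shows "integral_hopf C H mu_g eta_g delta_r eps_r s eta_r eps_g \<longleftrightarrow>
         s = mcomp C (mtens C (mid C H) (mcomp C eps_r mu_r))
                     (mtens C (mcomp C delta_g eta_g) (mid C H))"
proof -
  interpret pre_hopf_frobenius_algebra C H mu_g eta_g delta_g eps_g mu_r eta_r delta_r eps_r s
    using assms unfolding pre_hopf_frobenius_algebra_def pre_hopf_frobenius_def
    by (simp add: strict_smc_def frobenius_algebra_def frobenius_algebra_axioms_def
        hopf_algebra_def hopf_algebra_axioms_def)
  have "integral_hopf C H mu_g eta_g delta_r eps_r s eta_r eps_g
      \<longleftrightarrow> eps_g \<cdot> mu_g \<cdot> (\<one> H \<otimes> s) = eps_r \<cdot> mu_r"
    using hopf.hopf integral_iff_twisted_pairing unfolding integral_hopf_def by blast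
  also have "\<dots> \<longleftrightarrow> s = green.mate (eps_r \<cdot> mu_r)"
    using antipode_eq_mate_iff by simp
  finally show ?thesis
    unfolding green.mate_def .
qed

end
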